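(* Let $R$ be a ring with identity. Then $R$ is pseudopolar if and only if $R$ is both strongly $\pi$-rad clean and quasipolar.
   Context: $J(R)$ is the Jacobson radical and $U(R)$ the unit group of $R$. $\mathrm{comm}(a)=\{x\in R\mid xa=ax\}$, $\mathrm{comm}^2(a)=\{x\in R\mid xy=yx\text{ for all }y\in\mathrm{comm}(a)\}$; $R^{qnil}=\{a\in R\mid 1+ax\in U(R)\text{ for all }x\in\mathrm{comm}(a)\}$. An element $a$ is quasipolar if there is an idempotent $p\in\mathrm{comm}^2(a)$ with $a+p\in U(R)$ and $ap\in R^{qnil}$. An element $a$ is pseudopolar if there exist an idempotent $p\in\mathrm{comm}^2(a)$ and $k\in\mathbb{N}$ with $a+p\in U(R)$ and $a^kp\in J(R)$. An element $a$ is strongly $\pi$-rad clean if there is an idempotent $e\in R$ with $ae=ea$, $a-e\in U(R)$, and $a^ne\in J(R)$ for some $n\in\mathbb{N}$. The ring $R$ has one of these properties if every element does. *)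

theory Defs
  imports Main
begin

(* All notions are relative to the ring 'a :: ring_1 (a ring with identity,
   not necessarily commutative); the whole type is the ring R. *)

definition Units :: "'a::ring_1 set" where
  "Units = {u. \<exists>v. u * v = 1 \<and> v * u = 1}"

definition left_ideal :: "'a::ring_1 set \<Rightarrow> bool" where
  "left_ideal I \<longleftrightarrow> 0 \<in> I \<and> (\<forall>x\<in>I. \<forall>y\<in>I. x - y \<in> I) \<and> (\<forall>r. \<forall>x\<in>I. r * x \<in> I)"

definition maximal_left_ideal :: "'a::ring_1 set \<Rightarrow> bool" where
  "maximal_left_ideal M \<longleftrightarrow> left_ideal M \<and> M \<noteq> UNIV \<and>
     (\<forall>I. left_ideal I \<and> M \<subseteq> I \<and> I \<noteq> UNIV \<longrightarrow> I = M)"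

definition Jrad :: "'a::ring_1 set" where
  "Jrad = \<Inter> {M. maximal_left_ideal M}"

definition comm :: "'a::ring_1 \<Rightarrow> 'a set" where
  "comm a = {x. x * a = a * x}"

definition comm2 :: "'a::ring_1 \<Rightarrow> 'a set" where
  "comm2 a = {x. \<forall>y\<in>comm a. x * y = y * x}"

definition qnil :: "'a::ring_1 set" where
  "qnil = {a. \<forall>x\<in>comm a. 1 + a * x \<in> Units}"

definition idempotent :: "'a::ring_1 \<Rightarrow> bool" where
  "idempotent p \<longleftrightarrow> p * p = p"

definition quasipolar_elt :: "'a::ring_1 \<Rightarrow> bool" where
  "quasipolar_elt a \<longleftrightarrow> (\<exists>p. idempotent p \<and> p \<in> comm2 a \<and> a + p \<in> Units \<and> a * p \<in> qnil)"

definition pseudopolar_elt :: "'a::ring_1 \<Rightarrow> bool" where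
  "pseudopolar_elt a \<longleftrightarrow> (\<exists>p k. idempotent p \<and> p \<in> comm2 a \<and> a + p \<in> Units \<and> k \<ge> 1 \<and> a ^ k * p \<in> Jrad)"

definition spi_rad_clean_elt :: "'a::ring_1 \<Rightarrow> bool" where
  "spi_rad_clean_elt a \<longleftrightarrow> (\<exists>e n. idempotent e \<and> a * e = e * a \<and> a - e \<in> Units \<and> n \<ge> 1 \<and> a ^ n * e \<in> Jrad)"

definition quasipolar_ring :: "'a::ring_1 itself \<Rightarrow> bool" where
  "quasipolar_ring _ \<longleftrightarrow> (\<forall>a::'a. quasipolar_elt a)"

definition pseudopolar_ring :: "'a::ring_1 itself \<Rightarrow> bool" where
  "pseudopolar_ring _ \<longleftrightarrow> (\<forall>a::'a. pseudopolar_elt a)"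

definition spi_rad_clean_ring :: "'a::ring_1 itself \<Rightarrow> bool" where
  "spi_rad_clean_ring _ \<longleftrightarrow> (\<forall>a::'a. spi_rad_clean_elt a)"

end

theory Submission
  imports Defs
begin

text \<open>
  Strong \<open>\<pi>\<close>-rad cleanness is stated with \<open>a - e\<close> rather than \<open>a + p\<close>, so it is compared
  with pseudopolarity of \<open>-a\<close>. If \<open>a\<^sup>k p \<in> J(R)\<close> then \<open>ap\<close> is quasinilpotent, because
  \<open>1 - c\<close> is a unit as soon as \<open>c\<^sup>n \<in> J(R)\<close> (geometric series); so pseudopolar elements are
  quasipolar. Conversely, let \<open>p\<close> be the quasipolar idempotent of \<open>a\<close> and \<open>e\<close> the
  strongly \<open>\<pi>\<close>-rad clean idempotent of \<open>-a\<close>; they commute since \<open>p \<in> comm\<^sup>2(a)\<close>.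
  Then \<open>p(1 - e)\<close> is an idempotent \<open>f\<close> with \<open>1 - f\<close> a unit (from quasinilpotence of \<open>ap\<close> and
  \<open>a + e \<in> U(R)\<close>), and \<open>e(1 - p)\<close> is an idempotent in \<open>J(R)\<close> (from \<open>a\<^sup>n e \<in> J(R)\<close> and
  \<open>a + p \<in> U(R)\<close>). Both vanish, so \<open>p = e\<close> and \<open>a\<^sup>n p \<in> J(R)\<close>.
\<close>

lemma left_ideal_add:
  assumes "left_ideal I" "x \<in> I" "y \<in> I"
  shows "x + y \<in> I"
proof -
  have "0 - y \<in> I" using assms unfolding left_ideal_def by blast
  then have "x - (0 - y) \<in> I" using assms unfolding left_ideal_def by blast
  then show ?thesis by simp
qed

lemma left_ideal_eq_UNIV_iff:
  assumes "left_ideal I"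
  shows "I = UNIV \<longleftrightarrow> 1 \<in> I"
  using assms unfolding left_ideal_def by (metis UNIV_I UNIV_eq_I mult.right_neutral)

lemma left_ideal_Union_chain:
  assumes "C \<noteq> {}" "\<forall>I\<in>C. left_ideal I" "\<forall>I\<in>C. \<forall>I'\<in>C. I \<subseteq> I' \<or> I' \<subseteq> I"
  shows "left_ideal (\<Union>C)"
  unfolding left_ideal_def
proof (intro conjI ballI allI)
  show "0 \<in> \<Union>C" using assms(1,2) unfolding left_ideal_def by blast
next
  fix x y assume "x \<in> \<Union>C" "y \<in> \<Union>C"
  then obtain X Y where XY: "X \<in> C" "Y \<in> C" "x \<in> X" "y \<in> Y" by blast
  with assms(3) consider "X \<subseteq> Y" | "Y \<subseteq> X" by blast
  then show "x - y \<in> \<Union>C"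
    using XY assms(2) unfolding left_ideal_def by cases blast+
next
  fix r x assume "x \<in> \<Union>C"
  then show "r * x \<in> \<Union>C" using assms(2) unfolding left_ideal_def by blast
qed

lemma maximal_left_ideal_exists:
  fixes L :: "'a::ring_1 set"
  assumes "left_ideal L" "1 \<notin> L"
  obtains M where "maximal_left_ideal M" "L \<subseteq> M"
proof -
  define A where "A = {I. left_ideal I \<and> L \<subseteq> I \<and> (1::'a) \<notin> I}"
  have "\<Union>C \<in> A" if "C \<noteq> {}" "subset.chain A C" for C
    using that left_ideal_Union_chain[of C] unfolding A_def subset.chain_def by blast
  moreover have "L \<in> A" using assms unfolding A_def by blast
  ultimately obtain M where M: "M \<in> A" and max: "\<forall>I\<in>A. M \<subseteq> I \<longrightarrow> I = M"
    using subset_Zorn_nonempty[of A] by blast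
  have "maximal_left_ideal M"
    using M max left_ideal_eq_UNIV_iff unfolding maximal_left_ideal_def A_def by blast
  with M show ?thesis using that unfolding A_def by blast
qed

lemma Jrad_diff: "x \<in> Jrad \<Longrightarrow> y \<in> Jrad \<Longrightarrow> x - y \<in> (Jrad :: 'a::ring_1 set)"
  unfolding Jrad_def maximal_left_ideal_def left_ideal_def by auto

lemma Jrad_mult_left: "x \<in> Jrad \<Longrightarrow> r * x \<in> (Jrad :: 'a::ring_1 set)"
  unfolding Jrad_def maximal_left_ideal_def left_ideal_def by auto

lemma Jrad_left_invertible:
  fixes j :: "'a::ring_1"
  assumes "j \<in> Jrad"
  obtains u where "u * (1 - j) = 1"
proof (rule ccontr)
  assume no_inverse: "\<not> thesis"
  define L where "L = range (\<lambda>r. r * (1 - j))"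
  have "left_ideal L"
    unfolding left_ideal_def L_def
  proof (intro conjI ballI allI)
    show "0 \<in> range (\<lambda>r. r * (1 - j))" by (rule range_eqI[of _ _ 0]) simp
  next
    fix x y assume "x \<in> range (\<lambda>r. r * (1 - j))" "y \<in> range (\<lambda>r. r * (1 - j))"
    then obtain r s where "x = r * (1 - j)" "y = s * (1 - j)" by blast
    then show "x - y \<in> range (\<lambda>r. r * (1 - j))"
      by (simp add: rangeI flip: left_diff_distrib)
  next
    fix t x assume "x \<in> range (\<lambda>r. r * (1 - j))"
    then obtain r where "x = r * (1 - j)" by blast
    then show "t * x \<in> range (\<lambda>r. r * (1 - j))"
      by (simp add: rangeI flip: mult.assoc)
  qed
  moreover have "1 \<notin> L" using no_inverse that unfolding L_def by (metis rangeE)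
  ultimately obtain M where M: "maximal_left_ideal M" "L \<subseteq> M"
    by (rule maximal_left_ideal_exists)
  have "1 - j \<in> M" using M(2) unfolding L_def by (metis mult_1 rangeI subsetD)
  moreover have "j \<in> M" using assms M(1) unfolding Jrad_def by blast
  ultimately have "1 \<in> M"
    using M(1) left_ideal_add[of M "1 - j" j] unfolding maximal_left_ideal_def by simp
  then show False using M(1) left_ideal_eq_UNIV_iff unfolding maximal_left_ideal_def by blast
qed

lemma Units_if_left_right_inverse:
  fixes y :: "'a::ring_1"
  assumes "l * y = 1" "y * r = 1"
  shows "y \<in> Units"
proof -
  have "l = l * (y * r)" using assms(2) by simp
  also have "\<dots> = r" using assms(1) by (simp flip: mult.assoc)
  finally show ?thesis using assms unfolding Units_def by blast
qed

lemma Units_uminus: "u \<in> Units \<Longrightarrow> - u \<in> (Units :: 'a::ring_1 set)"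
  unfolding Units_def by (auto intro: exI[of _ "- v" for v])

lemma Units_if_commuting_mult_Units:
  fixes x y :: "'a::ring_1"
  assumes "x * y = y * x" "x * y \<in> Units"
  shows "x \<in> Units"
proof -
  obtain w where w: "x * y * w = 1" "w * (x * y) = 1" using assms(2) unfolding Units_def by blast
  have "(w * y) * x = 1" using w(2) assms(1) by (simp add: mult.assoc)
  moreover have "x * (y * w) = 1" using w(1) by (simp add: mult.assoc)
  ultimately show ?thesis by (rule Units_if_left_right_inverse)
qed

lemma inverse_commute:
  fixes u v y :: "'a::ring_1"
  assumes "u * v = 1" "v * u = 1" "y * u = u * y"
  shows "y * v = v * y"
proof -
  have "y * v = (v * u) * y * v" using assms(2) by simp
  also have "\<dots> = v * (y * u) * v" using assms(3) by (simp add: mult.assoc)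
  also have "\<dots> = v * y" using assms(1) by (simp add: mult.assoc)
  finally show ?thesis .
qed

lemma idempotent_eq_0_if_one_diff_Units:
  fixes f :: "'a::ring_1"
  assumes "idempotent f" "1 - f \<in> Units"
  shows "f = 0"
proof -
  obtain w where "w * (1 - f) = 1" using assms(2) unfolding Units_def by blast
  then have "f = w * ((1 - f) * f)" by (metis mult.assoc mult_1)
  also have "\<dots> = 0" using assms(1) unfolding idempotent_def by (simp add: algebra_simps)
  finally show ?thesis .
qed

lemma one_diff_Jrad_Units:
  fixes j :: "'a::ring_1"
  assumes "j \<in> Jrad"
  shows "1 - j \<in> Units"
proof -
  obtain u where u: "u * (1 - j) = 1" using assms by (rule Jrad_left_invertible)
  have "- (u * j) \<in> Jrad" using Jrad_mult_left[OF assms, of "- u"] by simp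
  then obtain w where "w * (1 - - (u * j)) = 1" by (rule Jrad_left_invertible)
  moreover have "1 - - (u * j) = u" using u by (simp add: algebra_simps)
  ultimately have "(1 - j) * u = 1"
    using u by (metis mult.assoc mult_1)
  with u show ?thesis unfolding Units_def by blast
qed

lemma idempotent_Jrad_eq_0: "idempotent g \<Longrightarrow> g \<in> Jrad \<Longrightarrow> g = (0 :: 'a::ring_1)"
  by (simp add: idempotent_eq_0_if_one_diff_Units one_diff_Jrad_Units)

lemma power_mult_commuting:
  fixes x y :: "'a::ring_1"
  assumes "x * y = y * x"
  shows "(x * y) ^ n = x ^ n * y ^ n"
proof (induction n)
  case (Suc n)
  have "(x * y) ^ Suc n = x * (y * x ^ n) * y ^ n" using Suc by (simp add: mult.assoc)
  also have "\<dots> = x * x ^ n * (y * y ^ n)"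
    by (simp add: mult.assoc flip: power_commuting_commutes[OF assms])
  finally show ?case by simp
qed simp

lemma one_diff_power_eq_ring_1:
  fixes c :: "'a::ring_1"
  shows "(1 - c) * (\<Sum>i<n. c ^ i) = 1 - c ^ n"
proof (induction n)
  case (Suc n)
  have "(1 - c) * (\<Sum>i<Suc n. c ^ i) = (1 - c) * (\<Sum>i<n. c ^ i) + (1 - c) * c ^ n"
    by (simp add: distrib_left)
  also have "\<dots> = 1 - c ^ Suc n" using Suc by (simp add: left_diff_distrib)
  finally show ?case .
qed simp

lemma qnil_if_power_Jrad:
  fixes b :: "'a::ring_1"
  assumes "b ^ n \<in> Jrad"
  shows "b \<in> qnil"
  unfolding qnil_def
proof (intro CollectI ballI)
  fix x assume "x \<in> comm b"
  then have xb: "x * b = b * x" unfolding comm_def by blast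
  define c where "c = - (b * x)"
  have "c ^ n = ((- 1) ^ n * x ^ n) * b ^ n"
    using power_mult_commuting[OF xb, of n] xb unfolding c_def power_minus[of "b * x"]
    by (simp add: mult.assoc)
  then have "1 - c ^ n \<in> Units"
    using one_diff_Jrad_Units Jrad_mult_left[OF assms] by metis
  moreover have "(\<Sum>i<n. c ^ i) * c = c * (\<Sum>i<n. c ^ i)"
    by (simp add: sum_distrib_left sum_distrib_right power_commutes)
  then have "(1 - c) * (\<Sum>i<n. c ^ i) = (\<Sum>i<n. c ^ i) * (1 - c)"
    by (simp add: left_diff_distrib right_diff_distrib)
  ultimately have "1 - c \<in> Units"
    using Units_if_commuting_mult_Units one_diff_power_eq_ring_1 by metis
  then show "1 + b * x \<in> Units" unfolding c_def by simp
qed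

lemma idempotent_diff_mult:
  fixes p e :: "'a::ring_1"
  assumes "idempotent p" "idempotent e" "p * e = e * p"
  shows "idempotent (p - p * e)"
proof -
  have "p * (p * e) = p * e" "p * e * p = p * e" "p * e * (p * e) = p * e"
    using assms unfolding idempotent_def by (metis mult.assoc)+
  with assms(1) show ?thesis unfolding idempotent_def by (simp add: algebra_simps)
qed

lemma power_mult_eq_if_mult_eq:
  fixes x y g :: "'a::ring_1"
  assumes "x * g = y * g" "g * y = y * g"
  shows "x ^ m * g = y ^ m * g"
proof (induction m)
  case (Suc m)
  have "x ^ Suc m * g = x ^ m * g * y" using assms by (simp add: power_Suc2 mult.assoc del: power_Suc)
  also have "\<dots> = y ^ Suc m * g" using Suc assms(2) by (simp add: power_Suc2 mult.assoc del: power_Suc)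
  finally show ?case .
qed simp

lemma idempotent_mult_eq_if_qnil:
  fixes a p e :: "'a::ring_1"
  assumes "idempotent p" "idempotent e" "p * e = e * p" "a * p = p * a" "a * e = e * a"
    and "a + e \<in> Units" "a * p \<in> qnil"
  shows "p * e = p"
proof -
  obtain u where u: "(a + e) * u = 1" "u * (a + e) = 1" using assms(6) unfolding Units_def by blast
  have "a * u = u * a" "p * u = u * p" "e * u = u * e"
    using assms(3-5) by (auto intro!: inverse_commute[OF u] simp: algebra_simps)
  then have ap_u: "a * p * u = u * (a * p)" and e_ap: "e * (a * p) = a * p * e"
    using assms(3,4,5) by (metis mult.assoc)+
  define f where "f = p - p * e"
  have "e * f = 0" using assms(2,3) unfolding f_def idempotent_def
    by (simp add: right_diff_distrib) (metis mult.assoc)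
  then have "u * (a * f) = u * (a + e) * f" by (simp add: distrib_right mult.assoc)
  then have "u * (a * f) = f" using u(2) by simp
  \<comment> \<open>the witness \<open>x = ue - u\<close> gives \<open>1 + apx = 1 - f\<close>\<close>
  moreover have "a * p * (u * e - u) = - (u * (a * f))"
    using ap_u e_ap unfolding f_def by (simp add: algebra_simps flip: mult.assoc)
  moreover have "u * e - u \<in> comm (a * p)"
    using ap_u e_ap \<open>e * u = u * e\<close> unfolding comm_def by (simp add: algebra_simps) (metis mult.assoc)
  ultimately have "1 - f \<in> Units" using assms(7) unfolding qnil_def by fastforce
  then have "f = 0"
    using idempotent_eq_0_if_one_diff_Units idempotent_diff_mult[OF assms(1-3)] f_def by blast
  then show ?thesis unfolding f_def by simp
qed

lemma idempotent_mult_eq_if_power_Jrad: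
  fixes a p e :: "'a::ring_1"
  assumes "idempotent p" "idempotent e" "p * e = e * p" "a * p = p * a" "a * e = e * a"
    and "a + p \<in> Units" "a ^ n * e \<in> Jrad"
  shows "e * p = e"
proof -
  obtain v where v: "(a + p) * v = 1" "v * (a + p) = 1" using assms(6) unfolding Units_def by blast
  define g where "g = e - e * p"
  have "p * (e * p) = p * e" using assms(1,3) unfolding idempotent_def by (metis mult.assoc)
  then have "p * g = 0" unfolding g_def by (simp add: right_diff_distrib assms(3))
  then have "a * g = (a + p) * g" by (simp add: distrib_right)
  moreover have "g * (a + p) = (a + p) * g"
  proof -
    have "e * p * a = a * (e * p)" "e * p * p = p * (e * p)"
      using assms(3-5) unfolding idempotent_def by (metis mult.assoc)+
    then show ?thesis
      unfolding g_def using assms(3,5) by (simp add: algebra_simps)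
  qed
  ultimately have "a ^ n * g = (a + p) ^ n * g" by (rule power_mult_eq_if_mult_eq)
  moreover have "v ^ n * (a + p) ^ n = 1"
    using power_mult_commuting[of v "a + p" n] v by simp
  ultimately have "g = v ^ n * (a ^ n * g)" by (simp flip: mult.assoc)
  moreover have "a ^ n * g = a ^ n * e - p * (a ^ n * e)"
  proof -
    have "a ^ n * (e * p) = p * (a ^ n * e)"
      using power_commuting_commutes[OF assms(4), of n] assms(3)
      by (metis mult.assoc)
    then show ?thesis unfolding g_def by (simp add: right_diff_distrib)
  qed
  ultimately have "g \<in> Jrad" using assms(7) Jrad_diff Jrad_mult_left by metis
  then have "g = 0"
    using idempotent_Jrad_eq_0 idempotent_diff_mult[OF assms(2,1) assms(3)[symmetric]] g_def by blast
  then show ?thesis unfolding g_def by simp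
qed

lemma power_uminus_mult_JradI: "a ^ k * p \<in> Jrad \<Longrightarrow> (- a) ^ k * (p :: 'a::ring_1) \<in> Jrad"
  using Jrad_mult_left[of "a ^ k * p" "(- 1) ^ k"] by (simp add: power_minus[of a] mult.assoc)

lemma power_uminus_mult_Jrad_iff: "(- a) ^ k * p \<in> Jrad \<longleftrightarrow> a ^ k * (p :: 'a::ring_1) \<in> Jrad"
  using power_uminus_mult_JradI[of a] power_uminus_mult_JradI[of "- a"] by auto

lemma comm2_commutes: "p \<in> comm2 a \<Longrightarrow> p * a = a * p"
  unfolding comm2_def comm_def by blast

lemma power_idempotent:
  fixes p :: "'a::ring_1"
  assumes "idempotent p" "k \<ge> 1"
  shows "p ^ k = p"
  using assms(2) by (induction k rule: dec_induct)
    (use assms(1) in \<open>simp_all add: idempotent_def power_Suc2 del: power_Suc\<close>)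

lemma quasipolar_elt_if_pseudopolar_elt:
  fixes a :: "'a::ring_1"
  assumes "pseudopolar_elt a"
  shows "quasipolar_elt a"
proof -
  obtain p k where p: "idempotent p" "p \<in> comm2 a" "a + p \<in> Units" "k \<ge> 1" "a ^ k * p \<in> Jrad"
    using assms unfolding pseudopolar_elt_def by blast
  have "(a * p) ^ k = a ^ k * p"
    using power_mult_commuting[of a p k] comm2_commutes[OF p(2)] power_idempotent[OF p(1,4)] by simp
  then have "a * p \<in> qnil" using qnil_if_power_Jrad p(5) by metis
  with p(1-3) show ?thesis unfolding quasipolar_elt_def by blast
qed

lemma spi_rad_clean_elt_if_pseudopolar_elt_uminus:
  fixes a :: "'a::ring_1"
  assumes "pseudopolar_elt (- a)"
  shows "spi_rad_clean_elt a"
proof -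
  obtain p k where p: "idempotent p" "p \<in> comm2 (- a)" "- a + p \<in> Units" "k \<ge> 1" "(- a) ^ k * p \<in> Jrad"
    using assms unfolding pseudopolar_elt_def by blast
  have "a * p = p * a" using comm2_commutes[OF p(2)] by simp
  moreover have "a - p \<in> Units" using Units_uminus[OF p(3)] by simp
  ultimately show ?thesis
    using p(1,4,5) power_uminus_mult_Jrad_iff unfolding spi_rad_clean_elt_def by blast
qed

lemma pseudopolar_elt_if_quasipolar_elt_spi_rad_clean_elt_uminus:
  fixes a :: "'a::ring_1"
  assumes "quasipolar_elt a" "spi_rad_clean_elt (- a)"
  shows "pseudopolar_elt a"
proof -
  obtain p where p: "idempotent p" "p \<in> comm2 a" "a + p \<in> Units" "a * p \<in> qnil"
    using assms(1) unfolding quasipolar_elt_def by blast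
  obtain e n where e: "idempotent e" "- a * e = e * - a" "- a - e \<in> Units" "n \<ge> 1" "(- a) ^ n * e \<in> Jrad"
    using assms(2) unfolding spi_rad_clean_elt_def by blast
  have ae: "a * e = e * a" and pe: "p * e = e * p" and ap: "a * p = p * a"
    using e(2) p(2) unfolding comm2_def comm_def by auto
  have "a + e \<in> Units" using Units_uminus[OF e(3)] by (simp add: algebra_simps)
  moreover have aeJ: "a ^ n * e \<in> Jrad" using e(5) power_uminus_mult_Jrad_iff by blast
  ultimately have "p * e = p" "e * p = e"
    using idempotent_mult_eq_if_qnil idempotent_mult_eq_if_power_Jrad p(1,3,4) e(1) pe ap ae by blast+
  then have "p = e" using pe by simp
  with p(1-3) e(4) aeJ show ?thesis unfolding pseudopolar_elt_def by blast
qed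

theorem theorem4p4:
  shows "pseudopolar_ring TYPE('a::ring_1) \<longleftrightarrow>
         spi_rad_clean_ring TYPE('a) \<and> quasipolar_ring TYPE('a)"
  unfolding pseudopolar_ring_def spi_rad_clean_ring_def quasipolar_ring_def
proof (intro iffI conjI allI)
  fix a :: 'a
  assume pseudopolar: "\<forall>a::'a. pseudopolar_elt a"
  show "spi_rad_clean_elt a"
    using pseudopolar spi_rad_clean_elt_if_pseudopolar_elt_uminus by blast
  show "quasipolar_elt a"
    using pseudopolar quasipolar_elt_if_pseudopolar_elt by blast
next
  fix a :: 'a
  assume "(\<forall>a::'a. spi_rad_clean_elt a) \<and> (\<forall>a::'a. quasipolar_elt a)"
  then show "pseudopolar_elt a"
    using pseudopolar_elt_if_quasipolar_elt_spi_rad_clean_elt_uminus by blast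
qed

end
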